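(* Let $n\ge3$. There is no weight-preserving bijection $\Phi$ from the set of arrowed monotone triangles with bottom row $(1,\dots,n)$ to the set of SBCSPPs of order $n$ such that the map sending each DPP-SBCSPP $D$ to the monotone triangle obtained from $\Phi^{-1}(D)$ by forgetting all decorations is a bijection from the set of DPP-SBCSPPs of order $n$ onto the set of monotone triangles with bottom row $(1,\dots,n)$.
   Context: A monotone triangle with $n$ rows is an array $(m_{i,j})_{1\le j\le i\le n}$ of integers with $m_{i+1,j}\le m_{i,j}\le m_{i+1,j+1}$, $m_{i,j}<m_{i,j+1}$; row $n$ is the bottom row; northwest/northeast-neighbours of $m_{i,j}$ are $m_{i-1,j-1}$, $m_{i-1,j}$. An arrowed monotone triangle decorates each entry by one of $\nwarrow,\nearrow,\nwarrow\!\nearrow$ with: an entry equal to its northwest-neighbour carries $\nearrow$; an entry equal to its northeast-neighbour carries $\nwarrow$. Weight: $u^{\#\nearrow}v^{\#\nwarrow}w^{\#\nwarrow\nearrow}\prod_i X_i^{(\text{sum of row } i)-(\text{sum of row } i-1)+(\#\nearrow\text{ in row }i)-(\#\nwarrow\text{ in row }i)}$. A near-balanced partition $(a_1,\dots,a_l\mid b_1,\dots,b_l)$ (Frobenius notation) has $a_i\in\{b_i,b_i+1\}$; $\mathrm{W}(\lambda)=w^{l+\sum(b_i-a_i)}$. An SBCSPP of order $n$ is a filling of a near-balanced shape with nonempty subsets of $\{1,\dots,n\}$, singletons strictly above the diagonal, row maxima weakly decreasing left to right, and columns strictly decreasing (all elements of an upper cell exceed all elements of the cell below). Weight: $\mathrm{W}(\lambda)\,u^{\#\text{cells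 strictly above diagonal}}\,v^{\binom{n+1}{2}-\#\text{entries on/below diagonal}}\,w^{\#\text{entries}-\#\text{cells}}\prod_iX_i^{\#\,i\text{'s}}$. A DPP-SBCSPP is an SBCSPP in which every cell is a singleton, the shape satisfies $a_i=b_i+1$ for all $i$, below each diagonal entry $d$ the entries in its column are $d-1,d-2,\dots,1$ (so that column has exactly $d-1$ cells below the diagonal), and no $1$ appears strictly above the diagonal. A bijection is weight-preserving if it maps each object to one of the same weight. *)

theory Defs
  imports Main
begin

text \<open>A monotone triangle with n rows is a function m with m i j the entry in
row i, position j, for 1 <= j <= i <= n; entries outside this index region are
normalised to 0 so that triangles are determined extensionally.\<close>

definition tri_idx :: "nat \<Rightarrow> (nat \<times> nat) set" where
  "tri_idx n = {(i, j). 1 \<le> j \<and> j \<le> i \<and> i \<le> n}"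

definition monotone_triangle :: "nat \<Rightarrow> (nat \<Rightarrow> nat \<Rightarrow> int) \<Rightarrow> bool" where
  "monotone_triangle n m \<longleftrightarrow>
     (\<forall>i j. (i, j) \<notin> tri_idx n \<longrightarrow> m i j = 0) \<and>
     (\<forall>i j. (i, j) \<in> tri_idx n \<and> i < n \<longrightarrow> m (i+1) j \<le> m i j \<and> m i j \<le> m (i+1) (j+1)) \<and>
     (\<forall>i j. (i, j) \<in> tri_idx n \<and> j < i \<longrightarrow> m i j < m i (j+1))"

definition MT :: "nat \<Rightarrow> (nat \<Rightarrow> nat \<Rightarrow> int) set" where
  "MT n = {m. monotone_triangle n m \<and> (\<forall>j\<in>{1..n}. m n j = int j)}"

datatype arrow = NW | NE | NWNE

text \<open>Northwest neighbour of m i j is m (i-1) (j-1), northeast is m (i-1) j.\<close>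
definition AMT :: "nat \<Rightarrow> ((nat \<Rightarrow> nat \<Rightarrow> int) \<times> (nat \<Rightarrow> nat \<Rightarrow> arrow)) set" where
  "AMT n = {(m, d). m \<in> MT n \<and>
     (\<forall>i j. (i, j) \<notin> tri_idx n \<longrightarrow> d i j = NWNE) \<and>
     (\<forall>i j. (i, j) \<in> tri_idx n \<longrightarrow>
        (2 \<le> j \<and> m i j = m (i-1) (j-1) \<longrightarrow> d i j = NE) \<and>
        (j < i \<and> m i j = m (i-1) j \<longrightarrow> d i j = NW))}"

text \<open>Weights are Laurent monomials in u, v, w, X_1, ..., X_n; we represent
them by their exponent vectors (exp u, exp v, exp w, i |-> exp X_i), with the
X-exponent set to 0 outside {1..n}.\<close>
type_synonym wt = "int \<times> int \<times> int \<times> (nat \<Rightarrow> int)"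

definition amt_weight :: "nat \<Rightarrow> (nat \<Rightarrow> nat \<Rightarrow> int) \<times> (nat \<Rightarrow> nat \<Rightarrow> arrow) \<Rightarrow> wt" where
  "amt_weight n t = (case t of (m, d) \<Rightarrow>
     (int (card {(i, j) \<in> tri_idx n. d i j = NE}),
      int (card {(i, j) \<in> tri_idx n. d i j = NW}),
      int (card {(i, j) \<in> tri_idx n. d i j = NWNE}),
      (\<lambda>i. if 1 \<le> i \<and> i \<le> n then
              (\<Sum>j=1..i. m i j) - (\<Sum>j=1..i-1. m (i-1) j)
              + int (card {j \<in> {1..i}. d i j = NE}) - int (card {j \<in> {1..i}. d i j = NW})
            else 0)))"

text \<open>A filling is a function F from cells (row r, column c), 1-based, to sets of
integers; the shape is the set of cells with nonempty entry (all other cells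
carry the empty set).\<close>

definition supp :: "(nat \<times> nat \<Rightarrow> nat set) \<Rightarrow> (nat \<times> nat) set" where
  "supp F = {p. F p \<noteq> {}}"

definition row_len :: "(nat \<times> nat \<Rightarrow> nat set) \<Rightarrow> nat \<Rightarrow> nat" where
  "row_len F r = card {c. F (r, c) \<noteq> {}}"

definition col_len :: "(nat \<times> nat \<Rightarrow> nat set) \<Rightarrow> nat \<Rightarrow> nat" where
  "col_len F c = card {r. F (r, c) \<noteq> {}}"

definition durfee :: "(nat \<times> nat \<Rightarrow> nat set) \<Rightarrow> nat" where
  "durfee F = card {i. F (i, i) \<noteq> {}}"

definition frob_a :: "(nat \<times> nat \<Rightarrow> nat set) \<Rightarrow> nat \<Rightarrow> int" where
  "frob_a F i = int (row_len F i) - int i"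

definition frob_b :: "(nat \<times> nat \<Rightarrow> nat set) \<Rightarrow> nat \<Rightarrow> int" where
  "frob_b F i = int (col_len F i) - int i"

definition young_shape :: "(nat \<times> nat \<Rightarrow> nat set) \<Rightarrow> bool" where
  "young_shape F \<longleftrightarrow> finite (supp F) \<and>
     (\<forall>r c. F (r, c) \<noteq> {} \<longrightarrow> 1 \<le> r \<and> 1 \<le> c) \<and>
     (\<forall>r c r' c'. F (r, c) \<noteq> {} \<and> 1 \<le> r' \<and> r' \<le> r \<and> 1 \<le> c' \<and> c' \<le> c \<longrightarrow> F (r', c') \<noteq> {})"

definition near_balanced :: "(nat \<times> nat \<Rightarrow> nat set) \<Rightarrow> bool" where
  "near_balanced F \<longleftrightarrow> young_shape F \<and>
     (\<forall>i\<in>{1..durfee F}. frob_a F i = frob_b F i \<or> frob_a F i = frob_b F i + 1)"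

definition sbcspp :: "nat \<Rightarrow> (nat \<times> nat \<Rightarrow> nat set) \<Rightarrow> bool" where
  "sbcspp n F \<longleftrightarrow> near_balanced F \<and>
     (\<forall>p. F p \<subseteq> {1..n}) \<and>
     (\<forall>r c. r < c \<and> F (r, c) \<noteq> {} \<longrightarrow> card (F (r, c)) = 1) \<and>
     (\<forall>r c. 1 \<le> c \<and> F (r, c+1) \<noteq> {} \<longrightarrow> Max (F (r, c+1)) \<le> Max (F (r, c))) \<and>
     (\<forall>r c. 1 \<le> r \<and> F (r+1, c) \<noteq> {} \<longrightarrow> (\<forall>x\<in>F (r, c). \<forall>y\<in>F (r+1, c). y < x))"

definition SBCSPP :: "nat \<Rightarrow> (nat \<times> nat \<Rightarrow> nat set) set" where
  "SBCSPP n = {F. sbcspp n F}"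

definition weight_W :: "(nat \<times> nat \<Rightarrow> nat set) \<Rightarrow> int" where
  "weight_W F = int (durfee F) + (\<Sum>i=1..durfee F. frob_b F i - frob_a F i)"

definition sbc_weight :: "nat \<Rightarrow> (nat \<times> nat \<Rightarrow> nat set) \<Rightarrow> wt" where
  "sbc_weight n F =
     (int (card {(r, c) \<in> supp F. r < c}),
      int ((n + 1) choose 2) - (\<Sum>p\<in>{(r, c) \<in> supp F. c \<le> r}. int (card (F p))),
      weight_W F + (\<Sum>p\<in>supp F. int (card (F p))) - int (card (supp F)),
      (\<lambda>i. if 1 \<le> i \<and> i \<le> n then int (card {p. i \<in> F p}) else 0))"

definition dpp_sbcspp :: "nat \<Rightarrow> (nat \<times> nat \<Rightarrow> nat set) \<Rightarrow> bool" where
  "dpp_sbcspp n F \<longleftrightarrow> sbcspp n F \<and>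
     (\<forall>p\<in>supp F. card (F p) = 1) \<and>
     (\<forall>i\<in>{1..durfee F}. frob_a F i = frob_b F i + 1) \<and>
     (\<forall>i d. F (i, i) = {d} \<longrightarrow>
        (\<forall>k. 1 \<le> k \<longrightarrow> (if k < d then F (i+k, i) = {d - k} else F (i+k, i) = {}))) \<and>
     (\<forall>r c. r < c \<longrightarrow> 1 \<notin> F (r, c))"

definition DPP :: "nat \<Rightarrow> (nat \<times> nat \<Rightarrow> nat set) set" where
  "DPP n = {F. dpp_sbcspp n F}"

end

theory Submission
  imports Defs
begin

(* Consider the monotone triangle whose i-th row is (1, ..., i - 1, n), and suppose it is the
   image of a DPP-SBCSPP D. Weight preservation compares two exponents.
   The exponent of X_1 on the triangle side is n, shifted by one according to the arrow on the
   top entry; in D every 1 lies weakly below the diagonal and no two 1s share a column, so the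
   Durfee size l of D is at least n - 1 (at least n + 1 if the top arrow is nearrow).
   In a DPP-SBCSPP the l-th row is longer than the l-th column, which forces the l-th row to
   reach column l + 2; hence D has at least 2 l + 1 cells above the diagonal, the exponent of u.
   On the triangle side every entry except the last two of a row equals its northeast
   neighbour and carries nwarrow, so at most 2 n - 1 entries carry nearrow, and only 2 n - 2
   unless the top entry does. Both cases contradict 2 l + 1. *)

lemma down_closed_nat_set_eq:
  fixes S :: "nat set"
  assumes fin: "finite S" and "0 \<notin> S"
    and down: "\<And>c c'. c \<in> S \<Longrightarrow> 1 \<le> c' \<Longrightarrow> c' \<le> c \<Longrightarrow> c' \<in> S"
  shows "S = {1..card S}"
proof (cases "S = {}")
  case False
  have "S = {1..Max S}"
  proof
    show "S \<subseteq> {1..Max S}"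
      using fin \<open>0 \<notin> S\<close> by (auto simp: Suc_le_eq intro: Max_ge gr0I)
    show "{1..Max S} \<subseteq> S"
      using down Max_in[OF fin False] by auto
  qed
  then show ?thesis by (metis card_atLeastAtMost diff_Suc_1)
qed simp

lemma young_shapeD:
  assumes "young_shape F"
  shows young_shape_finite: "finite (supp F)"
    and young_shape_pos: "F (r, c) \<noteq> {} \<Longrightarrow> 1 \<le> r \<and> 1 \<le> c"
    and young_shape_down:
      "F (r, c) \<noteq> {} \<Longrightarrow> 1 \<le> r' \<Longrightarrow> r' \<le> r \<Longrightarrow> 1 \<le> c' \<Longrightarrow> c' \<le> c \<Longrightarrow> F (r', c') \<noteq> {}"
  using assms unfolding young_shape_def by blast+

lemma young_row_eq:
  assumes Y: "young_shape F"
  shows "{c. F (r, c) \<noteq> {}} = {1..row_len F r}"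
  unfolding row_len_def
proof (rule down_closed_nat_set_eq)
  have "{c. F (r, c) \<noteq> {}} \<subseteq> snd ` supp F" by (force simp: supp_def)
  then show "finite {c. F (r, c) \<noteq> {}}"
    using young_shape_finite[OF Y] finite_subset by blast
qed (use young_shapeD[OF Y] in fastforce)+

lemma young_col_eq:
  assumes Y: "young_shape F"
  shows "{r. F (r, c) \<noteq> {}} = {1..col_len F c}"
  unfolding col_len_def
proof (rule down_closed_nat_set_eq)
  have "{r. F (r, c) \<noteq> {}} \<subseteq> fst ` supp F" by (force simp: supp_def)
  then show "finite {r. F (r, c) \<noteq> {}}"
    using young_shape_finite[OF Y] finite_subset by blast
qed (use young_shapeD[OF Y] in fastforce)+

lemma young_diag_eq:
  assumes Y: "young_shape F"
  shows "{i. F (i, i) \<noteq> {}} = {1..durfee F}"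
  unfolding durfee_def
proof (rule down_closed_nat_set_eq)
  have "{i. F (i, i) \<noteq> {}} \<subseteq> fst ` supp F" by (force simp: supp_def)
  then show "finite {i. F (i, i) \<noteq> {}}"
    using young_shape_finite[OF Y] finite_subset by blast
qed (use young_shapeD[OF Y] in fastforce)+

lemma young_cell_iff_row_len:
  assumes "young_shape F" "1 \<le> c"
  shows "F (r, c) \<noteq> {} \<longleftrightarrow> c \<le> row_len F r"
  using arg_cong[OF young_row_eq[OF assms(1)], of "\<lambda>S. c \<in> S"] assms(2) by simp

lemma young_cell_iff_col_len:
  assumes "young_shape F" "1 \<le> r"
  shows "F (r, c) \<noteq> {} \<longleftrightarrow> r \<le> col_len F c"
  using arg_cong[OF young_col_eq[OF assms(1)], of "\<lambda>S. r \<in> S"] assms(2) by simp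

lemma young_diag_iff_durfee:
  assumes "young_shape F" "1 \<le> i"
  shows "F (i, i) \<noteq> {} \<longleftrightarrow> i \<le> durfee F"
  using arg_cong[OF young_diag_eq[OF assms(1)], of "\<lambda>S. i \<in> S"] assms(2) by simp

lemma young_card_above_diag_ge:
  assumes Y: "young_shape F" and cell: "F (2, c) \<noteq> {}"
  shows "2 * c - 3 \<le> card {(r, c) \<in> supp F. r < c}"
proof -
  define A where "A = {1::nat} \<times> {2..c} \<union> {2} \<times> {3..c}"
  have "A \<subseteq> {(r, c) \<in> supp F. r < c}"
    using young_shape_down[OF Y cell] unfolding A_def supp_def by auto
  moreover have "finite {(r, c) \<in> supp F. r < c}"
    using young_shape_finite[OF Y] by (rule finite_subset[rotated]) auto
  ultimately have "card A \<le> card {(r, c) \<in> supp F. r < c}" by (rule card_mono[rotated])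
  moreover have "card A = (c - 1) + (c - 2)"
    unfolding A_def by (subst card_Un_disjoint) auto
  ultimately show ?thesis by linarith
qed

lemma sbcsppD:
  assumes "sbcspp n F"
  shows sbcspp_young: "young_shape F"
    and sbcspp_range: "F p \<subseteq> {1..n}"
    and sbcspp_above_diag_singleton: "r < c \<Longrightarrow> F (r, c) \<noteq> {} \<Longrightarrow> card (F (r, c)) = 1"
    and sbcspp_row_Max: "1 \<le> c \<Longrightarrow> F (r, c + 1) \<noteq> {} \<Longrightarrow> Max (F (r, c + 1)) \<le> Max (F (r, c))"
    and sbcspp_col_step:
      "1 \<le> r \<Longrightarrow> x \<in> F (r, c) \<Longrightarrow> y \<in> F (r + 1, c) \<Longrightarrow> y < x"
  using assms unfolding sbcspp_def near_balanced_def by blast+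

lemma sbcspp_col_less:
  assumes S: "sbcspp n F" and "r < r'" and x: "x \<in> F (r, c)" and y: "y \<in> F (r', c)"
  shows "y < x"
  using \<open>r < r'\<close> y
proof (induction r' arbitrary: y)
  case (Suc r')
  have Y: "young_shape F" by (rule sbcspp_young[OF S])
  have r: "1 \<le> r" and c: "1 \<le> c" using young_shape_pos[OF Y, of r c] x by blast+
  show ?case
  proof (cases "r = r'")
    case True
    then show ?thesis using sbcspp_col_step[OF S r x] Suc.prems(2) by simp
  next
    case False
    then have "r < r'" using Suc.prems(1) by simp
    have "F (Suc r', c) \<noteq> {}" using Suc.prems(2) by blast
    then have "F (r', c) \<noteq> {}" using young_shape_down[OF Y _ _ _ c] \<open>r < r'\<close> r by simp
    then obtain z where z: "z \<in> F (r', c)" by blast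
    have "z < x" using Suc.IH[OF \<open>r < r'\<close> z] .
    moreover have "y < z" using sbcspp_col_step[OF S _ z] Suc.prems(2) \<open>r < r'\<close> r by simp
    ultimately show ?thesis by simp
  qed
qed simp

lemma sbcspp_one_in_col_unique:
  assumes S: "sbcspp n F" and one: "1 \<in> F (r, c)" "1 \<in> F (r', c)"
  shows "r = r'"
proof (rule ccontr)
  assume "r \<noteq> r'"
  then consider "r < r'" | "r' < r" by linarith
  then show False
    using sbcspp_col_less[OF S _ one(1) one(2)] sbcspp_col_less[OF S _ one(2) one(1)] by cases auto
qed

lemma dpp_sbcsppD:
  assumes "dpp_sbcspp n F"
  shows dpp_sbcspp_sbcspp: "sbcspp n F"
    and dpp_sbcspp_singleton: "F (r, c) \<noteq> {} \<Longrightarrow> card (F (r, c)) = 1"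
    and dpp_sbcspp_row_col: "1 \<le> i \<Longrightarrow> i \<le> durfee F \<Longrightarrow> row_len F i = col_len F i + 1"
    and dpp_sbcspp_below_diag: "F (i, i) = {d} \<Longrightarrow> 1 \<le> k \<Longrightarrow> k < d \<Longrightarrow> F (i + k, i) = {d - k}"
    and dpp_sbcspp_no_one_above_diag: "r < c \<Longrightarrow> 1 \<notin> F (r, c)"
proof -
  from assms have "sbcspp n F" and single: "\<forall>p\<in>supp F. card (F p) = 1"
    and frob: "\<forall>i\<in>{1..durfee F}. frob_a F i = frob_b F i + 1"
    and below: "\<forall>i d. F (i, i) = {d} \<longrightarrow>
        (\<forall>k. 1 \<le> k \<longrightarrow> (if k < d then F (i+k, i) = {d - k} else F (i+k, i) = {}))"
    and no_one: "\<forall>r c. r < c \<longrightarrow> 1 \<notin> F (r, c)"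
    unfolding dpp_sbcspp_def by simp_all
  then show "sbcspp n F" "r < c \<Longrightarrow> 1 \<notin> F (r, c)" by blast+
  show "F (r, c) \<noteq> {} \<Longrightarrow> card (F (r, c)) = 1"
    using single unfolding supp_def by blast
  show "F (i, i) = {d} \<Longrightarrow> 1 \<le> k \<Longrightarrow> k < d \<Longrightarrow> F (i + k, i) = {d - k}"
    using below by simp
  show "1 \<le> i \<Longrightarrow> i \<le> durfee F \<Longrightarrow> row_len F i = col_len F i + 1"
    using frob unfolding frob_a_def frob_b_def by force
qed

lemma dpp_card_ones_le_durfee:
  assumes D: "dpp_sbcspp n F"
  shows "card {p. 1 \<in> F p} \<le> durfee F"
proof -
  have S: "sbcspp n F" by (rule dpp_sbcspp_sbcspp[OF D])
  have Y: "young_shape F" by (rule sbcspp_young[OF S])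
  have inj: "inj_on snd {p. 1 \<in> F p}"
  proof (rule inj_onI)
    fix p q assume "p \<in> {p. 1 \<in> F p}" "q \<in> {p. 1 \<in> F p}" "snd p = snd q"
    moreover obtain r c r' c' where "p = (r, c)" "q = (r', c')" by fastforce
    ultimately show "p = q" using sbcspp_one_in_col_unique[OF S, of r c r'] by simp
  qed
  have sub: "snd ` {p. 1 \<in> F p} \<subseteq> {1..durfee F}"
  proof (rule image_subsetI)
    fix p assume "p \<in> {p. 1 \<in> F p}"
    moreover obtain r c where p: "p = (r, c)" by fastforce
    ultimately have one: "1 \<in> F (r, c)" by simp
    then have "\<not> r < c" using dpp_sbcspp_no_one_above_diag[OF D, of r c] by blast
    moreover have c: "1 \<le> c" using young_shape_pos[OF Y, of r c] one by blast
    ultimately have "F (c, c) \<noteq> {}" using young_shape_down[OF Y, of r c c c] one by auto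
    then show "snd p \<in> {1..durfee F}" using young_diag_iff_durfee[OF Y c] c p by simp
  qed
  show ?thesis using card_inj_on_le[OF inj sub] by simp
qed

text \<open>Row l = durfee F has one cell more than column l, and column l has at least l + 1 cells:
  the cell (l, l + 1) holds some x \<ge> 2, so the diagonal entry is \<ge> 2 and has a cell below it.\<close>

lemma dpp_durfee_row_length:
  assumes D: "dpp_sbcspp n F" and l: "1 \<le> l" "l = durfee F"
  shows "F (l, l + 2) \<noteq> {}"
proof -
  have S: "sbcspp n F" by (rule dpp_sbcspp_sbcspp[OF D])
  have Y: "young_shape F" by (rule sbcspp_young[OF S])
  have row: "row_len F l = col_len F l + 1" using dpp_sbcspp_row_col[OF D] l by simp
  have diag: "F (l, l) \<noteq> {}" using young_diag_iff_durfee[OF Y] l by simp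
  then have "l \<le> col_len F l" using young_cell_iff_col_len[OF Y] l by blast
  then have next_cell: "F (l, l + 1) \<noteq> {}" using young_cell_iff_row_len[OF Y] row by simp
  obtain x where x: "F (l, l + 1) = {x}"
    using sbcspp_above_diag_singleton[OF S _ next_cell] card_1_singletonE by auto
  obtain d where d: "F (l, l) = {d}"
    using dpp_sbcspp_singleton[OF D diag] card_1_singletonE by blast
  have "x \<noteq> 1" using dpp_sbcspp_no_one_above_diag[OF D, of l "l + 1"] x by auto
  moreover have "1 \<le> x" using sbcspp_range[OF S, of "(l, l + 1)"] x by auto
  moreover have "x \<le> d" using sbcspp_row_Max[OF S _ next_cell] l x d by simp
  ultimately have "F (l + 1, l) \<noteq> {}" using dpp_sbcspp_below_diag[OF D d, of 1] by simp
  then have "l + 1 \<le> col_len F l" using young_cell_iff_col_len[OF Y] by simp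
  then show ?thesis using young_cell_iff_row_len[OF Y] row by simp
qed

lemma dpp_card_above_diag_ge:
  assumes D: "dpp_sbcspp n F" and l: "2 \<le> durfee F"
  shows "2 * durfee F + 1 \<le> card {(r, c) \<in> supp F. r < c}"
proof -
  have Y: "young_shape F" by (rule sbcspp_young[OF dpp_sbcspp_sbcspp[OF D]])
  have "F (durfee F, durfee F + 2) \<noteq> {}" using dpp_durfee_row_length[OF D] l by simp
  then have "F (2, durfee F + 2) \<noteq> {}" using young_shape_down[OF Y] l by simp
  then show ?thesis using young_card_above_diag_ge[OF Y] by fastforce
qed

definition corner_triangle :: "nat \<Rightarrow> nat \<Rightarrow> nat \<Rightarrow> int" where
  "corner_triangle n i j = (if (i, j) \<in> tri_idx n then if j = i then int n else int j else 0)"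

lemma corner_triangle_MT: "corner_triangle n \<in> MT n"
  unfolding MT_def monotone_triangle_def corner_triangle_def tri_idx_def by auto

lemma corner_triangle_card_NE:
  assumes t: "(corner_triangle n, d) \<in> AMT n" and n: "1 \<le> n"
  shows "card {(i, j) \<in> tri_idx n. d i j = NE} \<le> 2 * n - 2 + of_bool (d 1 1 = NE)"
proof -
  define S where "S = (\<lambda>i. (i, i)) ` {1..n} \<union> (\<lambda>i. (i, i - 1)) ` {2..n}"
  define X where "X = (if d 1 1 = NE then {} else {(1::nat, 1::nat)})"
  have "{(i, j) \<in> tri_idx n. d i j = NE} \<subseteq> S - X"
  proof clarify
    fix i j assume ij: "(i, j) \<in> tri_idx n" "d i j = NE"
    have "\<not> j + 1 < i"
    proof
      assume "j + 1 < i"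
      then have "corner_triangle n i j = corner_triangle n (i - 1) j"
        using ij(1) unfolding corner_triangle_def tri_idx_def by auto
      then have "d i j = NW" using t ij(1) \<open>j + 1 < i\<close> unfolding AMT_def by auto
      then show False using ij(2) by simp
    qed
    then show "(i, j) \<in> S - X" using ij unfolding S_def X_def tri_idx_def by (auto simp: image_iff)
  qed
  then have "card {(i, j) \<in> tri_idx n. d i j = NE} \<le> card (S - X)"
    by (rule card_mono[rotated]) (simp add: S_def)
  also have "\<dots> = card S - card X"
    using n by (intro card_Diff_subset) (auto simp: S_def X_def)
  finally have "card {(i, j) \<in> tri_idx n. d i j = NE} \<le> card S - card X" .
  moreover have "card S \<le> 2 * n - 1"
  proof -
    have "card S \<le> card ((\<lambda>i. (i, i)) ` {1..n}) + card ((\<lambda>i. (i, i - 1)) ` {2..n})"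
      unfolding S_def by (rule card_Un_le)
    also have "\<dots> \<le> card {1..n} + card {2..n}" by (intro add_mono card_image_le) simp_all
    finally show ?thesis using n by simp
  qed
  ultimately show ?thesis using n unfolding X_def by (simp split: if_splits)
qed

lemma amt_weight_u: "fst (amt_weight n (m, d)) = int (card {(i, j) \<in> tri_idx n. d i j = NE})"
  unfolding amt_weight_def by simp

lemma amt_weight_X1:
  "1 \<le> n \<Longrightarrow> snd (snd (snd (amt_weight n (m, d)))) 1
     = m 1 1 + of_bool (d 1 1 = NE) - of_bool (d 1 1 = NW)"
  unfolding amt_weight_def by (simp add: Collect_conj_eq Int_insert_left)

lemma sbc_weight_u: "fst (sbc_weight n F) = int (card {(r, c) \<in> supp F. r < c})"
  unfolding sbc_weight_def by simp

lemma sbc_weight_X1: "1 \<le> n \<Longrightarrow> snd (snd (snd (sbc_weight n F))) 1 = int (card {p. 1 \<in> F p})"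
  unfolding sbc_weight_def by simp

lemma dpp_weight_ne_corner_triangle:
  assumes n: "3 \<le> n" and t: "(corner_triangle n, d) \<in> AMT n" and D: "dpp_sbcspp n F"
  shows "sbc_weight n F \<noteq> amt_weight n (corner_triangle n, d)"
proof
  assume w: "sbc_weight n F = amt_weight n (corner_triangle n, d)"
  have n1: "1 \<le> n" using n by simp
  have "corner_triangle n 1 1 = int n" using n1 unfolding corner_triangle_def tri_idx_def by simp
  moreover have "int (card {p. 1 \<in> F p})
      = corner_triangle n 1 1 + of_bool (d 1 1 = NE) - of_bool (d 1 1 = NW)"
    using arg_cong[OF w, of "\<lambda>x. snd (snd (snd x)) 1"]
    unfolding amt_weight_X1[OF n1] sbc_weight_X1[OF n1] .
  ultimately have "int (card {p. 1 \<in> F p}) = int n + of_bool (d 1 1 = NE) - of_bool (d 1 1 = NW)"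
    by simp
  then have l: "int n - 1 + of_bool (d 1 1 = NE) \<le> int (durfee F)"
    using dpp_card_ones_le_durfee[OF D] by (auto simp: of_bool_def split: if_splits)
  then have "2 \<le> durfee F" using n by (simp add: of_bool_def split: if_splits)
  then have "2 * durfee F + 1 \<le> card {(r, c) \<in> supp F. r < c}"
    by (rule dpp_card_above_diag_ge[OF D])
  also have "\<dots> = card {(i, j) \<in> tri_idx n. d i j = NE}"
    using arg_cong[OF w, of fst] by (simp add: amt_weight_u sbc_weight_u)
  also have "\<dots> \<le> 2 * n - 2 + of_bool (d 1 1 = NE)"
    using corner_triangle_card_NE[OF t] n by simp
  finally show False using l n by (auto simp: of_bool_def split: if_splits)
qed

theorem mainTheorem5:
  fixes n :: nat
  assumes "n \<ge> 3"
  shows "\<not> (\<exists>\<Phi> :: (nat \<Rightarrow> nat \<Rightarrow> int) \<times> (nat \<Rightarrow> nat \<Rightarrow> arrow) \<Rightarrow> (nat \<times> nat \<Rightarrow> nat set).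
            bij_betw \<Phi> (AMT n) (SBCSPP n) \<and>
            (\<forall>t\<in>AMT n. sbc_weight n (\<Phi> t) = amt_weight n t) \<and>
            bij_betw (\<lambda>D. fst (inv_into (AMT n) \<Phi> D)) (DPP n) (MT n))"
proof (intro notI, elim exE conjE)
  fix \<Phi> assume \<Phi>: "bij_betw \<Phi> (AMT n) (SBCSPP n)"
    and weight: "\<forall>t\<in>AMT n. sbc_weight n (\<Phi> t) = amt_weight n t"
    and forget: "bij_betw (\<lambda>D. fst (inv_into (AMT n) \<Phi> D)) (DPP n) (MT n)"
  have "corner_triangle n \<in> (\<lambda>D. fst (inv_into (AMT n) \<Phi> D)) ` DPP n"
    using forget corner_triangle_MT unfolding bij_betw_def by simp
  then obtain D where D: "dpp_sbcspp n D" and fst_t: "fst (inv_into (AMT n) \<Phi> D) = corner_triangle n"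
    unfolding DPP_def by (metis (mono_tags, lifting) imageE mem_Collect_eq)
  define t where "t = inv_into (AMT n) \<Phi> D"
  have "D \<in> \<Phi> ` AMT n"
    using \<Phi> dpp_sbcspp_sbcspp[OF D] unfolding bij_betw_def SBCSPP_def by simp
  then have t: "t \<in> AMT n" "\<Phi> t = D" unfolding t_def by (rule inv_into_into, rule f_inv_into_f)
  obtain d where td: "t = (corner_triangle n, d)" using fst_t unfolding t_def[symmetric] by (cases t) simp
  have "sbc_weight n D = amt_weight n (corner_triangle n, d)" using bspec[OF weight t(1)] t(2) td by simp
  then show False using dpp_weight_ne_corner_triangle[OF assms t(1)[unfolded td] D] by simp
qed

end
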